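(* Let $k\ge 3$. Then $\chi_\rho(S^2_{P_k})=3$ if $k=3$, and $\chi_\rho(S^2_{P_k})=4$ if $k\ge 4$.
   Context: $P_k$ is the path with vertex set $[k]=\{0,\dots,k-1\}$ and edges $\{i,i+1\}$, $0\le i\le k-2$. For a graph $G$ with vertex set $[k]$ and $n\ge 1$, the generalized Sierpi\'nski graph $S^n_G$ has vertex set $[k]^n$, and $u=u_1\cdots u_n$, $v=v_1\cdots v_n$ are adjacent iff there is $i$ with: $u_j=v_j$ for $j<i$; $u_i\neq v_i$ and $u_iv_i\in E(G)$; and $u_j=v_i$, $v_j=u_i$ for all $j>i$. A packing $c$-coloring of a graph $X$ is a map $f:V(X)\to\{1,\dots,c\}$ such that any two distinct vertices $u,v$ with $f(u)=f(v)=i$ satisfy $d_X(u,v)>i$; the packing chromatic number $\chi_\rho(X)$ is the least such $c$. *)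

theory Defs
  imports "HOL-Library.Extended_Nat"
begin

definition path_graph_adj :: "nat \<Rightarrow> nat \<Rightarrow> bool" where
  "path_graph_adj i j \<longleftrightarrow> j = i + 1 \<or> i = j + 1"

definition path_vertices :: "nat \<Rightarrow> nat set" where
  "path_vertices k = {0..<k}"

(* Generalized Sierpinski graph S^n_G for G on [k] with adjacency E:
   vertex set [k]^n, words as lists of length n (positions 0..n-1). *)
definition sierp_vertices :: "nat \<Rightarrow> nat \<Rightarrow> nat list set" where
  "sierp_vertices k n = {u. length u = n \<and> (\<forall>x\<in>set u. x < k)}"

definition sierp_adj :: "(nat \<Rightarrow> nat \<Rightarrow> bool) \<Rightarrow> nat list \<Rightarrow> nat list \<Rightarrow> bool" where
  "sierp_adj E u v \<longleftrightarrow> length u = length v \<and>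
     (\<exists>i < length u. (\<forall>j < i. u ! j = v ! j) \<and> u ! i \<noteq> v ! i \<and> E (u ! i) (v ! i) \<and>
        (\<forall>j. i < j \<and> j < length u \<longrightarrow> u ! j = v ! i \<and> v ! j = u ! i))"

definition is_walk :: "'a set \<Rightarrow> ('a \<Rightarrow> 'a \<Rightarrow> bool) \<Rightarrow> 'a list \<Rightarrow> bool" where
  "is_walk V adj xs \<longleftrightarrow> xs \<noteq> [] \<and> set xs \<subseteq> V \<and>
     (\<forall>i. Suc i < length xs \<longrightarrow> adj (xs ! i) (xs ! Suc i))"

(* graph distance; \<infinity> if no walk exists *)
definition gdist :: "'a set \<Rightarrow> ('a \<Rightarrow> 'a \<Rightarrow> bool) \<Rightarrow> 'a \<Rightarrow> 'a \<Rightarrow> enat" where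
  "gdist V adj u v = (INF xs \<in> {xs. is_walk V adj xs \<and> hd xs = u \<and> last xs = v}.
                        enat (length xs - 1))"

definition packing_coloring :: "'a set \<Rightarrow> ('a \<Rightarrow> 'a \<Rightarrow> bool) \<Rightarrow> nat \<Rightarrow> ('a \<Rightarrow> nat) \<Rightarrow> bool" where
  "packing_coloring V adj c f \<longleftrightarrow>
     (\<forall>u\<in>V. f u \<in> {1..c}) \<and>
     (\<forall>u\<in>V. \<forall>v\<in>V. u \<noteq> v \<and> f u = f v \<longrightarrow> gdist V adj u v > enat (f u))"

definition packing_chromatic_number :: "'a set \<Rightarrow> ('a \<Rightarrow> 'a \<Rightarrow> bool) \<Rightarrow> nat" where
  "packing_chromatic_number V adj = (LEAST c. \<exists>f. packing_coloring V adj c f)"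

end

theory Submission
  imports Defs
begin

(*
  S^2_{P_k} consists of k copies of P_k, copy a having the vertices ax (x < k), and consecutive
  copies a, a + 1 are joined by the single edge a(a+1) -- (a+1)a.

  Upper bound: colour ax with 1 if x is even, with 4 if x = a is odd, and otherwise with 2 or 3
  according as x = 1 or x = 3 (mod 4). Since every walk between different copies has to use the
  bridges, same-coloured vertices are far enough apart.

  Lower bound: for k = 3 the vertices 00, 01, 10, 11 form a path on four vertices, which has no
  packing 2-colouring. For k >= 4 take a packing 3-colouring. The adjacent vertices 12 and 21 both
  have degree 3, so neither gets colour 1 and they get colours 3 and 2. Walking two steps on from
  the one coloured 2, away from the one coloured 3, the first vertex is forced to colour 1 and the
  second has no colour left.
*)

lemma mod_eq_imp_eq_or_apart:
  fixes x y m :: nat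
  assumes "x mod m = y mod m"
  shows "x = y \<or> x + m \<le> y \<or> y + m \<le> x"
proof -
  have x: "x = m * (x div m) + x mod m" and y: "y = m * (y div m) + y mod m" by simp_all
  consider "x div m = y div m" | "x div m + 1 \<le> y div m" | "y div m + 1 \<le> x div m" by linarith
  then show ?thesis
  proof cases
    case 1
    then show ?thesis using x y assms by metis
  next
    case 2
    then have "m * (x div m) + m \<le> m * (y div m)"
      by (metis add_mult_distrib2 mult.right_neutral mult_le_mono2)
    then show ?thesis using x y assms by linarith
  next
    case 3
    then have "m * (y div m) + m \<le> m * (x div m)"
      by (metis add_mult_distrib2 mult.right_neutral mult_le_mono2)
    then show ?thesis using x y assms by linarith
  qed
qed

lemma is_walk_singleton [simp]: "is_walk V adj [x] \<longleftrightarrow> x \<in> V"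
  by (auto simp: is_walk_def)

lemma is_walk_Cons_Cons [simp]:
  "is_walk V adj (x # y # xs) \<longleftrightarrow> x \<in> V \<and> adj x y \<and> is_walk V adj (y # xs)"
  by (auto simp: is_walk_def nth_Cons split: nat.splits)

lemma gdist_le_walk:
  assumes "is_walk V adj xs" "hd xs = u" "last xs = v"
  shows "gdist V adj u v \<le> enat (length xs - 1)"
  unfolding gdist_def using assms by (intro INF_lower) auto

lemma walk_potential_le:
  assumes lipschitz: "\<And>v w. v \<in> V \<Longrightarrow> w \<in> V \<Longrightarrow> adj v w \<Longrightarrow> \<phi> w \<le> \<phi> v + (1::int)"
    and "is_walk V adj xs"
  shows "\<phi> (last xs) \<le> \<phi> (hd xs) + int (length xs - 1)"
  using assms(2)
proof (induction xs rule: induct_list012)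
  case (3 x y ys)
  then have "\<phi> y \<le> \<phi> x + 1" using lipschitz by (auto simp: is_walk_def)
  with 3 show ?case by simp
qed (simp_all add: is_walk_def)

lemma gdist_ge_potential:
  assumes "\<And>v w. v \<in> V \<Longrightarrow> w \<in> V \<Longrightarrow> adj v w \<Longrightarrow> \<phi> w \<le> \<phi> v + (1::int)"
  shows "enat (nat (\<phi> v - \<phi> u)) \<le> gdist V adj u v"
  unfolding gdist_def
proof (rule INF_greatest)
  fix xs assume "xs \<in> {xs. is_walk V adj xs \<and> hd xs = u \<and> last xs = v}"
  then have "\<phi> v \<le> \<phi> u + int (length xs - 1)"
    using walk_potential_le[OF assms] by auto
  then show "enat (nat (\<phi> v - \<phi> u)) \<le> enat (length xs - 1)" by simp
qed

lemma packing_coloring_range: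
  "packing_coloring V adj c f \<Longrightarrow> u \<in> V \<Longrightarrow> 1 \<le> f u \<and> f u \<le> c"
  by (auto simp: packing_coloring_def)

lemma packing_coloring_mono:
  "packing_coloring V adj c f \<Longrightarrow> c \<le> d \<Longrightarrow> packing_coloring V adj d f"
  by (auto simp: packing_coloring_def)

lemma packing_chromatic_number_eqI:
  assumes "packing_coloring V adj m f" and "\<And>g. \<not> packing_coloring V adj (m - 1) g"
  shows "packing_chromatic_number V adj = m"
  unfolding packing_chromatic_number_def
proof (rule Least_equality)
  show "\<exists>f. packing_coloring V adj m f" using assms(1) by blast
next
  fix c assume "\<exists>g. packing_coloring V adj c g"
  then obtain g where g: "packing_coloring V adj c g" by blast
  show "m \<le> c"
  proof (rule ccontr)
    assume "\<not> m \<le> c"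
    then have "packing_coloring V adj (m - 1) g" using packing_coloring_mono[OF g] by simp
    with assms(2) show False by blast
  qed
qed

lemma packing_coloring_merge_unused_color:
  assumes f: "packing_coloring V adj (Suc c) f" and unused: "\<And>u. u \<in> V \<Longrightarrow> f u \<noteq> c"
    and "0 < c"
  shows "packing_coloring V adj c (\<lambda>u. min c (f u))"
  unfolding packing_coloring_def
proof (intro conjI ballI impI)
  fix u assume "u \<in> V"
  then show "min c (f u) \<in> {1..c}" using packing_coloring_range[OF f] \<open>0 < c\<close> by fastforce
next
  fix u v assume uv: "u \<in> V" "v \<in> V" "u \<noteq> v \<and> min c (f u) = min c (f v)"
  have "f u \<le> Suc c" "f v \<le> Suc c" "f u \<noteq> c" "f v \<noteq> c"
    using uv unused packing_coloring_range[OF f] by auto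
  with uv have "f u = f v" by (simp add: min_def split: if_splits)
  have "enat (min c (f u)) \<le> enat (f u)" by simp
  also have "\<dots> < gdist V adj u v" using f uv \<open>f u = f v\<close> by (auto simp: packing_coloring_def)
  finally show "enat (min c (f u)) < gdist V adj u v" .
qed

lemma packing_coloring_walk:
  assumes "packing_coloring V adj c f" "is_walk V adj xs" "hd xs \<noteq> last xs"
    "f (hd xs) = f (last xs)"
  shows "f (hd xs) < length xs - 1"
proof -
  have "hd xs \<in> V" "last xs \<in> V" using assms(2) by (auto simp: is_walk_def)
  then have "enat (f (hd xs)) < gdist V adj (hd xs) (last xs)"
    using assms(1,3,4) by (auto simp: packing_coloring_def)
  also have "\<dots> \<le> enat (length xs - 1)" using gdist_le_walk[OF assms(2)] by simp
  finally show ?thesis by simp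
qed

lemma packing_coloring_adj_neq:
  assumes f: "packing_coloring V adj c f" and "u \<in> V" "v \<in> V" "adj u v" "u \<noteq> v"
  shows "f u \<noteq> f v"
  using packing_coloring_walk[OF f, of "[u, v]"] packing_coloring_range[OF f] assms(2-5)
  by fastforce

lemma path4_not_packing_2_colorable:
  assumes f: "packing_coloring V adj 2 f"
    and walk: "is_walk V adj [x0, x1, x2, x3]" and "distinct [x0, x1, x2, x3]"
  shows False
proof -
  note close = packing_coloring_walk[OF f]
  have range: "1 \<le> f x \<and> f x \<le> 2" if "x \<in> {x0, x1, x2, x3}" for x
    using packing_coloring_range[OF f] walk that by auto
  have "f x0 \<noteq> f x1" "f x1 \<noteq> f x2" "f x2 \<noteq> f x3"
    "f x0 = f x2 \<longrightarrow> f x0 < 2" "f x1 = f x3 \<longrightarrow> f x1 < 2"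
    using close[of "[x0, x1]"] close[of "[x1, x2]"] close[of "[x2, x3]"]
      close[of "[x0, x1, x2]"] close[of "[x1, x2, x3]"]
      range[of x0] range[of x1] range[of x2] walk assms(3) by auto
  with range[of x0] range[of x1] range[of x2] range[of x3] show False by (simp; linarith)
qed

lemma packing_3_coloring_degree3_not_1:
  assumes f: "packing_coloring V adj 3 f" and "symp adj"
    and "v \<in> V" "w1 \<in> V" "w2 \<in> V" "w3 \<in> V" "adj v w1" "adj v w2" "adj v w3"
    and "distinct [v, w1, w2, w3]"
  shows "f v \<noteq> 1"
proof
  assume "f v = 1"
  note close = packing_coloring_walk[OF f]
  have range: "1 \<le> f w \<and> f w \<le> 3" if "w \<in> {w1, w2, w3}" for w
    using packing_coloring_range[OF f] assms(4-6) that by auto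
  have "adj w1 v" "adj w2 v" using assms(2,7,8) by (auto dest: sympD)
  have not_1: "f w1 \<noteq> 1" "f w2 \<noteq> 1" "f w3 \<noteq> 1"
    using close[of "[v, w1]"] close[of "[v, w2]"] close[of "[v, w3]"] \<open>f v = 1\<close> assms(3-10)
    by auto
  have "f w1 \<noteq> f w2" "f w1 \<noteq> f w3" "f w2 \<noteq> f w3"
    using close[of "[w1, v, w2]"] close[of "[w1, v, w3]"] close[of "[w2, v, w3]"]
      \<open>adj w1 v\<close> \<open>adj w2 v\<close> not_1 range[of w1] range[of w2] assms(3-10) by auto
  with not_1 range[of w1] range[of w2] range[of w3] show False by (simp; linarith)
qed

lemma packing_3_coloring_path4_not_3_2:
  assumes f: "packing_coloring V adj 3 f"
    and walk: "is_walk V adj [v, w, y, z]" and "distinct [v, w, y, z]"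
    and "f v = 3" "f w = 2"
  shows False
proof -
  note close = packing_coloring_walk[OF f]
  have range: "1 \<le> f y \<and> f y \<le> 3" "1 \<le> f z \<and> f z \<le> 3"
    using packing_coloring_range[OF f] walk by auto
  have "f y \<noteq> 2" "f y \<noteq> 3"
    using close[of "[w, y]"] close[of "[v, w, y]"] walk assms(3-5) by auto
  moreover have "f z \<noteq> f y" "f z \<noteq> 2" "f z \<noteq> 3"
    using close[of "[y, z]"] close[of "[w, y, z]"] close[of "[v, w, y, z]"] range walk assms(3-5)
    by auto
  ultimately show False using range by linarith
qed

lemma sierp_adj_two:
  "sierp_adj E [a, x] [b, y] \<longleftrightarrow>
     (a \<noteq> b \<and> E a b \<and> x = b \<and> y = a) \<or> (a = b \<and> x \<noteq> y \<and> E x y)"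
proof -
  have ex2: "(\<exists>i<length [a, x]. P i) \<longleftrightarrow> P 0 \<or> P 1" for P :: "nat \<Rightarrow> bool"
    by (auto simp: Ex_less_Suc)
  have all2: "(\<forall>j. i < j \<and> j < length [a, x] \<longrightarrow> Q j) \<longleftrightarrow> (i = 0 \<longrightarrow> Q 1)"
    for i and Q :: "nat \<Rightarrow> bool"
    by (auto simp: less_Suc_eq)
  show ?thesis
    unfolding sierp_adj_def ex2 all2 by auto
qed

lemma symp_sierp_adj:
  assumes "symp E"
  shows "symp (sierp_adj E)"
proof (rule sympI)
  fix u v assume "sierp_adj E u v"
  then obtain i where "length u = length v" "i < length u" "\<forall>j < i. u ! j = v ! j"
    "u ! i \<noteq> v ! i" "E (u ! i) (v ! i)"
    "\<forall>j. i < j \<and> j < length u \<longrightarrow> u ! j = v ! i \<and> v ! j = u ! i"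
    unfolding sierp_adj_def by blast
  then show "sierp_adj E v u"
    unfolding sierp_adj_def by (intro conjI exI[of _ i]) (use assms in \<open>auto dest: sympD\<close>)
qed

lemma symp_path_graph_adj: "symp path_graph_adj"
  by (auto simp: symp_def path_graph_adj_def)

lemma sierp_vertices_two:
  "u \<in> sierp_vertices k 2 \<longleftrightarrow> (\<exists>a x. u = [a, x] \<and> a < k \<and> x < k)"
  by (auto simp: sierp_vertices_def length_Suc_conv numeral_2_eq_2)

(*
  The distance from ax to by in S^2_{P_k}: for a < b a walk leaves copy a at a(a+1), crosses the
  b - a bridges, runs through each of the b - a - 1 intermediate copies c from c(c-1) to c(c+1)
  in two steps, and enters copy b at b(b-1).
*)
definition sierp_path_dist :: "nat \<Rightarrow> nat \<Rightarrow> nat \<Rightarrow> nat \<Rightarrow> int" where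
  "sierp_path_dist a x b y =
     (if a = b then \<bar>int x - int y\<bar>
      else if a < b then \<bar>int x - int a - 1\<bar> + 3 * (int b - int a) - 2 + \<bar>int y - int b + 1\<bar>
      else \<bar>int y - int b - 1\<bar> + 3 * (int a - int b) - 2 + \<bar>int x - int a + 1\<bar>)"

lemma sierp_path_dist_adj:
  assumes "sierp_adj path_graph_adj [b, y] [c, z]"
  shows "sierp_path_dist a x c z \<le> sierp_path_dist a x b y + 1"
  using assms unfolding sierp_adj_two path_graph_adj_def sierp_path_dist_def by auto

lemma sierp_path_dist_le_gdist:
  "enat (nat (sierp_path_dist a x b y))
     \<le> gdist (sierp_vertices k 2) (sierp_adj path_graph_adj) [a, x] [b, y]"
proof -
  let ?\<phi> = "\<lambda>v. sierp_path_dist a x (v ! 0) (v ! 1)"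
  have "enat (nat (?\<phi> [b, y] - ?\<phi> [a, x]))
          \<le> gdist (sierp_vertices k 2) (sierp_adj path_graph_adj) [a, x] [b, y]"
    by (rule gdist_ge_potential) (auto simp: sierp_vertices_two intro: sierp_path_dist_adj)
  then show ?thesis by (simp add: sierp_path_dist_def)
qed

lemma sierp_path_dist_even:
  assumes "even x" "even y" "(a, x) \<noteq> (b, y)"
  shows "1 < sierp_path_dist a x b y"
proof -
  have "x = y \<or> x + 2 \<le> y \<or> y + 2 \<le> x"
    using mod_eq_imp_eq_or_apart[of x 2 y] assms(1,2) by (simp add: even_iff_mod_2_eq_zero)
  then show ?thesis using assms(3) unfolding sierp_path_dist_def by auto
qed

lemma sierp_path_dist_mod4:
  assumes "x mod 4 = y mod 4" "x \<noteq> a" "y \<noteq> b" "(a, x) \<noteq> (b, y)"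
  shows "3 < sierp_path_dist a x b y"
  using mod_eq_imp_eq_or_apart[OF assms(1)] assms(2-4) unfolding sierp_path_dist_def by auto

lemma sierp_path_dist_diag:
  assumes "odd a" "odd b" "a \<noteq> b"
  shows "4 < sierp_path_dist a a b b"
proof -
  have "a + 2 \<le> b \<or> b + 2 \<le> a"
    using mod_eq_imp_eq_or_apart[of a 2 b] assms by (simp add: odd_iff_mod_2_eq_one)
  then show ?thesis unfolding sierp_path_dist_def by auto
qed

definition sierp_path_coloring :: "nat list \<Rightarrow> nat" where
  "sierp_path_coloring u =
     (if even (u ! 1) then 1 else if u ! 1 = u ! 0 then 4 else if u ! 1 mod 4 = 1 then 2 else 3)"

lemma sierp_path_coloring_less_dist:
  assumes "(a, x) \<noteq> (b, y)" "sierp_path_coloring [a, x] = sierp_path_coloring [b, y]"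
  shows "int (sierp_path_coloring [a, x]) < sierp_path_dist a x b y"
proof -
  have odd_mod_4: "n mod 4 = 1 \<or> n mod 4 = 3" if "odd n" for n :: nat
    using that by presburger
  consider "even x" | "odd x" "x = a" | "odd x" "x \<noteq> a" by blast
  then show ?thesis
  proof cases
    case 1
    then have "even y" using assms(2) by (simp add: sierp_path_coloring_def split: if_splits)
    then show ?thesis using 1 assms sierp_path_dist_even[of x y a b]
      by (simp add: sierp_path_coloring_def)
  next
    case 2
    then have "odd y" "y = b"
      using assms(2) by (simp_all add: sierp_path_coloring_def split: if_splits)
    then show ?thesis using 2 assms sierp_path_dist_diag[of a b]
      by (simp add: sierp_path_coloring_def)
  next
    case 3
    then have "odd y" "y \<noteq> b" "x mod 4 = y mod 4"
      using assms(2) odd_mod_4[of x] odd_mod_4[of y]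
      by (simp_all add: sierp_path_coloring_def split: if_splits)
    then show ?thesis using 3 assms sierp_path_dist_mod4[of x y a b]
      by (simp add: sierp_path_coloring_def)
  qed
qed

lemma sierp_path_coloring_packing:
  "packing_coloring (sierp_vertices k 2) (sierp_adj path_graph_adj) 4 sierp_path_coloring"
  unfolding packing_coloring_def
proof (intro conjI ballI impI)
  fix u show "sierp_path_coloring u \<in> {1..4}" by (simp add: sierp_path_coloring_def)
next
  fix u v assume "u \<in> sierp_vertices k 2" "v \<in> sierp_vertices k 2"
    and "u \<noteq> v \<and> sierp_path_coloring u = sierp_path_coloring v"
  then obtain a x b y where uv: "u = [a, x]" "v = [b, y]" and "(a, x) \<noteq> (b, y)"
    "sierp_path_coloring [a, x] = sierp_path_coloring [b, y]"
    by (auto simp: sierp_vertices_two)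
  then have "enat (sierp_path_coloring u) < enat (nat (sierp_path_dist a x b y))"
    using sierp_path_coloring_less_dist by fastforce
  also have "\<dots> \<le> gdist (sierp_vertices k 2) (sierp_adj path_graph_adj) u v"
    using sierp_path_dist_le_gdist uv by simp
  finally show "enat (sierp_path_coloring u) < gdist (sierp_vertices k 2) (sierp_adj path_graph_adj) u v" .
qed

lemma sierp_path_not_packing_2_colorable:
  assumes "2 \<le> k"
  shows "\<not> packing_coloring (sierp_vertices k 2) (sierp_adj path_graph_adj) 2 f"
proof
  assume f: "packing_coloring (sierp_vertices k 2) (sierp_adj path_graph_adj) 2 f"
  show False
    using path4_not_packing_2_colorable[OF f, of "[0, 0]" "[0, 1]" "[1, 0]" "[1, 1]"] assms
    by (auto simp: sierp_adj_two path_graph_adj_def sierp_vertices_def)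
qed

lemma sierp_path_not_packing_3_colorable:
  assumes "4 \<le> k"
  shows "\<not> packing_coloring (sierp_vertices k 2) (sierp_adj path_graph_adj) 3 f"
proof
  let ?V = "sierp_vertices k 2" and ?E = "sierp_adj path_graph_adj"
  assume f: "packing_coloring ?V ?E 3 f"
  note graph_simps = sierp_adj_two path_graph_adj_def sierp_vertices_def
  have sym: "symp ?E" by (rule symp_sierp_adj[OF symp_path_graph_adj])
  have "f [1, 2] \<noteq> 1"
    by (rule packing_3_coloring_degree3_not_1[OF f sym, of "[1, 2]" "[1, 1]" "[1, 3]" "[2, 1]"])
      (use assms in \<open>auto simp: graph_simps\<close>)
  moreover have "f [2, 1] \<noteq> 1"
    by (rule packing_3_coloring_degree3_not_1[OF f sym, of "[2, 1]" "[2, 0]" "[2, 2]" "[1, 2]"])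
      (use assms in \<open>auto simp: graph_simps\<close>)
  moreover have "f [1, 2] \<noteq> f [2, 1]"
    by (rule packing_coloring_adj_neq[OF f]) (use assms in \<open>auto simp: graph_simps\<close>)
  moreover have "1 \<le> f [1, 2] \<and> f [1, 2] \<le> 3" "1 \<le> f [2, 1] \<and> f [2, 1] \<le> 3"
    using packing_coloring_range[OF f] assms by (auto simp: graph_simps)
  ultimately consider "f [1, 2] = 3" "f [2, 1] = 2" | "f [2, 1] = 3" "f [1, 2] = 2"
    by fastforce
  then show False
  proof cases
    case 1
    show False
      using packing_3_coloring_path4_not_3_2[OF f _ _ 1, of "[2, 2]" "[2, 3]"] assms
      by (auto simp: graph_simps)
  next
    case 2
    show False
      using packing_3_coloring_path4_not_3_2[OF f _ _ 2, of "[1, 1]" "[1, 0]"] assms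
      by (auto simp: graph_simps)
  qed
qed

theorem proposition3:
  fixes k :: nat
  assumes "k \<ge> 3"
  shows "packing_chromatic_number (sierp_vertices k 2) (sierp_adj path_graph_adj)
           = (if k = 3 then 3 else 4)"
proof (cases "k = 3")
  case True
  have "sierp_path_coloring u \<noteq> 3" if "u \<in> sierp_vertices 3 2" for u
    using that by (auto simp: sierp_vertices_two sierp_path_coloring_def; presburger)
  then have "packing_coloring (sierp_vertices 3 2) (sierp_adj path_graph_adj) 3
               (\<lambda>u. min 3 (sierp_path_coloring u))"
    by (intro packing_coloring_merge_unused_color) (simp_all add: sierp_path_coloring_packing)
  then show ?thesis
    using packing_chromatic_number_eqI sierp_path_not_packing_2_colorable True by fastforce
next
  case False
  then show ?thesis
    using packing_chromatic_number_eqI[OF sierp_path_coloring_packing]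
      sierp_path_not_packing_3_colorable assms
    by simp
qed

end
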